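(* At iteration $\ell$ of the procedure, suppose $Z_{X,\ell}\in\mathbb{S}^r_{++}$, $Z_{S,\ell}\in\mathbb{S}^{n-r}_{--}$ (negative definite), and $\|Z_{O,\ell}\|_2\le\frac{3}{4\eta_\ell}$. Then the Sylvester equation $W_O Z_{X,\ell}+(-Z_{S,\ell})W_O=Z_{O,\ell}$ has a unique solution $W_{O,\ell}$ satisfying $\|W_{O,\ell}\|_2\le\eta_\ell\|Z_{O,\ell}\|_2$. Moreover, \begin{align*} &\max\{\|Z_{X,\ell+1}-Z_{X,\ell}\|_2,\ \|Z_{S,\ell+1}-Z_{S,\ell}\|_2,\ \|Z_{O,\ell+1}\|_2\}\\ \le\ &\Big(\tfrac{4}{9}\eta_\ell^4\|Z_0\|_2^3+\tfrac{4}{3}\eta_\ell^3\|Z_0\|_2^2+\tfrac{13}{3}\eta_\ell^2\|Z_0\|_2+4\eta_\ell\Big)\|Z_{O,\ell}\|_2^2 \end{align*} for all $\ell\in\mathbb{N}$.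
   Context: Let $Z=\mathrm{diag}(\lambda_1,\dots,\lambda_n)\in\mathbb{S}^n$ be nonsingular with $\lambda_1\ge\dots\ge\lambda_r>0>\lambda_{r+1}\ge\dots\ge\lambda_n$, and let $H\in\mathbb{S}^n$ be a perturbation. The iterative elimination procedure starts with $Z_0=\begin{bmatrix}Z_{X,0}&Z_{O,0}^{\mathsf T}\\ Z_{O,0}&Z_{S,0}\end{bmatrix}:=Z+H$ (blocks $Z_{X,\ell}\in\mathbb{S}^r$, $Z_{S,\ell}\in\mathbb{S}^{n-r}$, $Z_{O,\ell}\in\mathbb{R}^{(n-r)\times r}$). At iteration $\ell$ it solves $W_O Z_{X,\ell}+(-Z_{S,\ell})W_O=Z_{O,\ell}$ for $W_{O,\ell}$, sets the skew-symmetric matrix $W_\ell=\begin{bmatrix}0&-W_{O,\ell}^{\mathsf T}\\ W_{O,\ell}&0\end{bmatrix}$, and updates $Z_{\ell+1}=\begin{bmatrix}Z_{X,\ell+1}&Z_{O,\ell+1}^{\mathsf T}\\ Z_{O,\ell+1}&Z_{S,\ell+1}\end{bmatrix}:=\exp(W_\ell)^{\mathsf T}Z_\ell\exp(W_\ell)$. Define $d=\sqrt{\min\{r,n-r\}}$ and $\eta_\ell=\dfrac{d}{\lambda_{\min}(Z_{X,\ell})-\lambda_{\max}(Z_{S,\ell})}$. *)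

theory Defs
  imports "HOL-Analysis.Analysis"
begin

text \<open>Matrices are real^'c^'m (rows indexed by 'm). The full index set is 'r + 's:
  Inl a are the first r indices, Inr b the last n-r indices.\<close>

definition spec_norm :: "real^'c^'m \<Rightarrow> real" where
  "spec_norm A = onorm (\<lambda>x. A *v x)"

fun mpow :: "real^'n^'n \<Rightarrow> nat \<Rightarrow> real^'n^'n" where
  "mpow A 0 = mat 1"
| "mpow A (Suc k) = A ** mpow A k"

definition mexp :: "real^'n^'n \<Rightarrow> real^'n^'n" where
  "mexp A = (\<Sum>k. (1 / fact k) *\<^sub>R mpow A k)"

definition eigvals :: "real^'n^'n \<Rightarrow> real set" where
  "eigvals A = {\<mu>. \<exists>v. v \<noteq> 0 \<and> A *v v = \<mu> *\<^sub>R v}"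

definition lam_min :: "real^'n^'n \<Rightarrow> real" where
  "lam_min A = Min (eigvals A)"

definition lam_max :: "real^'n^'n \<Rightarrow> real" where
  "lam_max A = Max (eigvals A)"

definition pos_def :: "real^'n^'n \<Rightarrow> bool" where
  "pos_def A \<longleftrightarrow> transpose A = A \<and> (\<forall>x. x \<noteq> 0 \<longrightarrow> x \<bullet> (A *v x) > 0)"

definition neg_def :: "real^'n^'n \<Rightarrow> bool" where
  "neg_def A \<longleftrightarrow> transpose A = A \<and> (\<forall>x. x \<noteq> 0 \<longrightarrow> x \<bullet> (A *v x) < 0)"

definition diagm :: "('n \<Rightarrow> real) \<Rightarrow> real^'n^'n" where
  "diagm lam = (\<chi> i j. if i = j then lam i else 0)"

definition blkX :: "real^('r::finite+'s::finite)^('r+'s) \<Rightarrow> real^'r^'r" where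
  "blkX Z = (\<chi> a a'. Z $ Inl a $ Inl a')"

definition blkS :: "real^('r::finite+'s::finite)^('r+'s) \<Rightarrow> real^'s^'s" where
  "blkS Z = (\<chi> b b'. Z $ Inr b $ Inr b')"

definition blkO :: "real^('r::finite+'s::finite)^('r+'s) \<Rightarrow> real^'r^'s" where
  "blkO Z = (\<chi> b a. Z $ Inr b $ Inl a)"

definition skewW :: "real^'r^'s \<Rightarrow> real^('r+'s)^('r+'s)" where
  "skewW WO = (\<chi> i j. case (i, j) of
       (Inl a, Inr b) \<Rightarrow> - (WO $ b $ a)
     | (Inr b, Inl a) \<Rightarrow> WO $ b $ a
     | _ \<Rightarrow> 0)"

definition sylv_sol :: "real^('r::finite+'s::finite)^('r+'s) \<Rightarrow> real^'r^'s \<Rightarrow> bool" where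
  "sylv_sol Z W \<longleftrightarrow> W ** blkX Z + (- blkS Z) ** W = blkO Z"

definition elim_step :: "real^('r::finite+'s::finite)^('r+'s) \<Rightarrow> real^('r+'s)^('r+'s)" where
  "elim_step Z = (let E = mexp (skewW (THE W. sylv_sol Z W)) in transpose E ** Z ** E)"

definition elim_iter :: "real^('r::finite+'s::finite)^('r+'s) \<Rightarrow> nat \<Rightarrow> real^('r+'s)^('r+'s)" where
  "elim_iter Z0 l = (elim_step ^^ l) Z0"

definition eta_of :: "real^('r::finite+'s::finite)^('r+'s) \<Rightarrow> real" where
  "eta_of Z = sqrt (real (min CARD('r) CARD('s))) / (lam_min (blkX Z) - lam_max (blkS Z))"

end

theory Submission
  imports Defs
begin

text \<open>
  In the Frobenius inner product the Sylvester operator \<open>W \<mapsto> W Z\<^sub>X + (-Z\<^sub>S) W\<close> is coercive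
  with constant \<open>\<lambda>\<^sub>m\<^sub>i\<^sub>n(Z\<^sub>X) - \<lambda>\<^sub>m\<^sub>a\<^sub>x(Z\<^sub>S)\<close>, so it is invertible and
  \<open>\<parallel>W\<^sub>O\<parallel>\<^sub>2 \<le> \<parallel>W\<^sub>O\<parallel>\<^sub>F \<le> \<parallel>Z\<^sub>O\<parallel>\<^sub>F / (\<lambda>\<^sub>m\<^sub>i\<^sub>n(Z\<^sub>X) - \<lambda>\<^sub>m\<^sub>a\<^sub>x(Z\<^sub>S)) \<le> \<eta> \<parallel>Z\<^sub>O\<parallel>\<^sub>2\<close>.

  The update \<open>exp(-W) Z exp(W)\<close> is an orthogonal conjugation, so \<open>\<parallel>Z\<^sub>\<ell>\<parallel> \<le> \<parallel>Z\<^sub>0\<parallel>\<close>. To first order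
  it adds the commutator \<open>Z W - W Z\<close>: its off-diagonal block is \<open>-Z\<^sub>O\<close> by the choice of \<open>W\<^sub>O\<close>,
  and its diagonal blocks have norm at most \<open>2 \<parallel>Z\<^sub>O\<parallel> \<parallel>W\<^sub>O\<parallel>\<close>. The remainder is bounded in any
  Banach algebra by \<open>\<parallel>Z\<parallel> (e\<^sup>2\<^sup>t - 1 - 2t)\<close> with \<open>t = \<parallel>W\<parallel> \<le> 3/4\<close>, hence by \<open>13/3 \<parallel>Z\<parallel> t\<^sup>2\<close>.
  Altogether each block moves by at most \<open>(2\<eta> + 13/3 \<eta>\<^sup>2 \<parallel>Z\<^sub>0\<parallel>) \<parallel>Z\<^sub>O\<parallel>\<^sup>2\<close>, which the stated
  polynomial dominates.
\<close>

lemma matrix_add_rdistrib: "((A::'a::semiring_1^'n^'m) + B) ** C = A ** C + B ** C"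
  by (vector matrix_matrix_mult_def sum.distrib[symmetric] field_simps)

lemma matrix_mult_uminus_left: "(- A) ** B = - ((A::'a::ring_1^'n^'m) ** B)"
  by (simp add: matrix_matrix_mult_def vec_eq_iff sum_negf)

lemma transpose_uminus: "transpose (- A) = - transpose (A::real^'n^'m)"
  by (simp add: transpose_def vec_eq_iff)

lemma uminus_mult_vec: "(- A) *v x = - ((A::real^'n^'m) *v x)"
  by (simp add: matrix_vector_mult_diff_rdistrib[of 0, simplified])

lemma inner_mult_transpose: "inner ((A::real^'c^'m) *v x) y = inner x (transpose A *v y)"
  by (metis dot_lmul_matrix inner_commute transpose_matrix_vector)

lemma inner_transpose: "inner (transpose A) (transpose B) = inner (A::real^'c^'m) B"
  unfolding inner_vec_def transpose_def by simp (rule sum.swap)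

lemma norm_transpose: "norm (transpose (A::real^'c^'m)) = norm A"
  by (simp add: norm_eq_sqrt_inner inner_transpose)

lemma symmetric_entry: "transpose Z = Z \<Longrightarrow> Z $ i $ j = Z $ j $ i"
  by (metis transpose_def vec_lambda_beta)

lemma symmetric_inner_swap: "transpose A = A \<Longrightarrow> inner u ((A::real^'n^'n) *v v) = inner v (A *v u)"
  by (metis inner_mult_transpose inner_commute)

lemma sum_UNIV_Plus:
  fixes f :: "'r::finite + 's::finite \<Rightarrow> 'a::comm_monoid_add"
  shows "(\<Sum>i\<in>UNIV. f i) = (\<Sum>a\<in>UNIV. f (Inl a)) + (\<Sum>b\<in>UNIV. f (Inr b))"
  by (subst UNIV_Plus_UNIV[symmetric], subst sum.Plus) auto

section \<open>The spectral norm\<close>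

lemma spec_norm_apply_le: "norm ((A::real^'c^'m) *v x) \<le> spec_norm A * norm x"
  unfolding spec_norm_def by (rule onorm) simp

lemma spec_norm_le: "(\<And>x. norm ((A::real^'c^'m) *v x) \<le> b * norm x) \<Longrightarrow> spec_norm A \<le> b"
  unfolding spec_norm_def by (rule onorm_le)

lemma spec_norm_nonneg: "0 \<le> spec_norm (A::real^'c^'m)"
  unfolding spec_norm_def by (rule onorm_pos_le) simp

lemma spec_norm_eq_0_iff: "spec_norm (A::real^'c^'m) = 0 \<longleftrightarrow> A = 0"
  unfolding spec_norm_def by (simp add: onorm_eq_0) (metis matrix_vector_mult_0 matrix_eq)

lemma spec_norm_triangle: "spec_norm ((A::real^'c^'m) + B) \<le> spec_norm A + spec_norm B"
proof -
  have "(*v) (A + B) = (\<lambda>x. A *v x + B *v x)" by (auto simp: matrix_vector_mult_add_rdistrib)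
  then show ?thesis unfolding spec_norm_def by (simp add: onorm_triangle)
qed

lemma spec_norm_scaleR: "spec_norm (r *\<^sub>R (A::real^'c^'m)) = \<bar>r\<bar> * spec_norm A"
proof -
  have "(*v) (r *\<^sub>R A) = (\<lambda>x. r *\<^sub>R (A *v x))" by (auto simp: scaleR_matrix_vector_assoc)
  then show ?thesis unfolding spec_norm_def by (simp add: onorm_scaleR)
qed

lemma spec_norm_uminus: "spec_norm (- (A::real^'c^'m)) = spec_norm A"
  using spec_norm_scaleR[of "-1" A] by simp

lemma spec_norm_mult_le: "spec_norm ((A::real^'c^'m) ** (B::real^'d^'c)) \<le> spec_norm A * spec_norm B"
proof (rule spec_norm_le)
  fix x
  have "norm ((A ** B) *v x) \<le> spec_norm A * norm (B *v x)"
    unfolding matrix_vector_mul_assoc[symmetric] by (rule spec_norm_apply_le)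
  also have "\<dots> \<le> spec_norm A * (spec_norm B * norm x)"
    by (rule mult_left_mono[OF spec_norm_apply_le spec_norm_nonneg])
  finally show "norm ((A ** B) *v x) \<le> spec_norm A * spec_norm B * norm x" by (simp add: mult.assoc)
qed

lemma spec_norm_transpose: "spec_norm (transpose (A::real^'c^'m)) = spec_norm A"
proof -
  have le: "spec_norm (transpose B) \<le> spec_norm B" for B :: "real^'d^'k"
  proof (rule spec_norm_le)
    fix y
    have "norm (transpose B *v y) ^ 2 = inner (B *v (transpose B *v y)) y"
      by (simp add: power2_norm_eq_inner inner_mult_transpose)
    also have "\<dots> \<le> spec_norm B * norm (transpose B *v y) * norm y"
      by (rule order_trans[OF norm_cauchy_schwarz mult_right_mono[OF spec_norm_apply_le norm_ge_zero]])
    finally have sq: "norm (transpose B *v y) * norm (transpose B *v y)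
        \<le> (spec_norm B * norm y) * norm (transpose B *v y)"
      by (simp add: power2_eq_square mult_ac)
    show "norm (transpose B *v y) \<le> spec_norm B * norm y"
    proof (cases "transpose B *v y = 0")
      case True
      then show ?thesis by (simp add: spec_norm_nonneg)
    next
      case False
      then show ?thesis using sq by (simp add: mult_le_cancel_right_pos)
    qed
  qed
  show ?thesis using le[of A] le[of "transpose A"] by simp
qed

lemma spec_norm_transpose_mult_le: "spec_norm (transpose A ** B) \<le> spec_norm A * spec_norm B"
  and spec_norm_mult_transpose_le: "spec_norm (C ** transpose D) \<le> spec_norm C * spec_norm D"
  using spec_norm_mult_le[of "transpose A" B] spec_norm_mult_le[of C "transpose D"]
  by (simp_all add: spec_norm_transpose)

lemma norm_mult_orthogonal_matrix:
  assumes "orthogonal_matrix (Q::real^'n^'n)"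
  shows "norm (Q *v x) = norm x"
proof -
  have "inner (Q *v x) (Q *v x) = inner x x"
    using assms by (simp add: inner_mult_transpose matrix_vector_mul_assoc orthogonal_matrix)
  then show ?thesis by (simp add: norm_eq_sqrt_inner)
qed

lemma spec_norm_orthogonal_conj_le:
  assumes "orthogonal_matrix (Q::real^'n^'n)"
  shows "spec_norm (transpose Q ** A ** Q) \<le> spec_norm A"
proof (rule spec_norm_le)
  fix x
  have "(transpose Q ** A ** Q) *v x = transpose Q *v (A *v (Q *v x))"
    by (metis matrix_vector_mul_assoc)
  then have "norm ((transpose Q ** A ** Q) *v x) = norm (A *v (Q *v x))"
    using assms by (simp add: norm_mult_orthogonal_matrix del: transpose_matrix_vector)
  also have "\<dots> \<le> spec_norm A * norm x"
    using spec_norm_apply_le[of A "Q *v x"] assms by (simp add: norm_mult_orthogonal_matrix)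
  finally show "norm ((transpose Q ** A ** Q) *v x) \<le> spec_norm A * norm x" .
qed

lemma norm_row_le_spec_norm: "norm ((A::real^'c^'m) $ i) \<le> spec_norm A"
proof -
  have "A $ i = column i (transpose A)"
    by (simp add: column_def transpose_def vec_eq_iff)
  moreover have "norm (column i (transpose A)) \<le> spec_norm (transpose A)"
    unfolding spec_norm_def by (rule norm_column_le_onorm)
  ultimately show ?thesis by (simp add: spec_norm_transpose)
qed

lemma spec_norm_le_norm: "spec_norm (A::real^'c^'m) \<le> norm A"
proof (rule spec_norm_le)
  fix x
  have "norm (A *v x) ^ 2 = (\<Sum>i\<in>UNIV. inner (A $ i) x ^ 2)"
    unfolding power2_norm_eq_inner
    by (simp only: inner_vec_def inner_real_def power2_eq_square matrix_vector_mul_component)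
  also have "\<dots> \<le> (\<Sum>i\<in>UNIV. norm (A $ i) ^ 2 * norm x ^ 2)"
  proof (intro sum_mono)
    fix i
    have "\<bar>inner (A $ i) x\<bar> ^ 2 \<le> (norm (A $ i) * norm x) ^ 2"
      by (rule power_mono[OF Cauchy_Schwarz_ineq2 abs_ge_zero])
    then show "inner (A $ i) x ^ 2 \<le> norm (A $ i) ^ 2 * norm x ^ 2"
      by (simp add: power_mult_distrib)
  qed
  also have "\<dots> = (norm A * norm x) ^ 2"
    by (simp add: power_mult_distrib sum_distrib_right power2_norm_eq_inner inner_vec_def)
  finally show "norm (A *v x) \<le> norm A * norm x"
    by (rule power2_le_imp_le) simp
qed

text \<open>Each row and each column has norm at most the spectral norm; counting along the shorter side
  gives the factor.\<close>
lemma norm_le_sqrt_card_spec_norm: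
  "norm (A::real^'c^'m) \<le> sqrt (real (min CARD('c) CARD('m))) * spec_norm A"
proof -
  have rows: "norm B ^ 2 \<le> real CARD('k) * spec_norm B ^ 2" for B :: "real^'d^'k"
  proof -
    have "norm B ^ 2 = (\<Sum>i\<in>UNIV. norm (B $ i) ^ 2)"
      by (simp add: power2_norm_eq_inner inner_vec_def)
    also have "\<dots> \<le> (\<Sum>i\<in>(UNIV::'k set). spec_norm B ^ 2)"
      by (intro sum_mono power_mono norm_row_le_spec_norm) simp
    finally show ?thesis by simp
  qed
  have "norm A ^ 2 \<le> real (min CARD('c) CARD('m)) * spec_norm A ^ 2"
    using rows[of A] rows[of "transpose A"]
    unfolding norm_transpose spec_norm_transpose by (simp add: min_def)
  also have "\<dots> = (sqrt (real (min CARD('c) CARD('m))) * spec_norm A) ^ 2"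
    by (simp add: power_mult_distrib)
  finally show ?thesis
    by (rule power2_le_imp_le) (simp add: spec_norm_nonneg)
qed

section \<open>Block decomposition\<close>

definition vec_inl :: "real^('r::finite+'s::finite) \<Rightarrow> real^'r" where
  "vec_inl x = (\<chi> a. x $ Inl a)"

definition vec_inr :: "real^('r::finite+'s::finite) \<Rightarrow> real^'s" where
  "vec_inr x = (\<chi> b. x $ Inr b)"

definition vec_join :: "real^'r::finite \<Rightarrow> real^'s::finite \<Rightarrow> real^('r+'s)" where
  "vec_join u v = (\<chi> i. case i of Inl a \<Rightarrow> u $ a | Inr b \<Rightarrow> v $ b)"

lemma norm_vec_split: "norm x ^ 2 = norm (vec_inl x) ^ 2 + norm (vec_inr x) ^ 2"
  by (simp add: power2_norm_eq_inner inner_vec_def sum_UNIV_Plus vec_inl_def vec_inr_def)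

lemma vec_inl_join [simp]: "vec_inl (vec_join u v) = u"
  and vec_inr_join [simp]: "vec_inr (vec_join u v) = v"
  by (simp_all add: vec_inl_def vec_inr_def vec_join_def vec_eq_iff)

lemma norm_vec_join_left [simp]: "norm (vec_join u 0) = norm u"
  and norm_vec_join_right [simp]: "norm (vec_join 0 v) = norm v"
  using norm_vec_split[of "vec_join u 0"] norm_vec_split[of "vec_join 0 v"]
  by simp_all

lemma norm_vec_inl_le: "norm (vec_inl x) \<le> norm x"
  and norm_vec_inr_le: "norm (vec_inr x) \<le> norm x"
  using norm_vec_split[of x] by (auto intro: power2_le_imp_le)

lemma blkX_mult_vec: "blkX M *v u = vec_inl (M *v vec_join u 0)"
  and blkS_mult_vec: "blkS M *v v = vec_inr (M *v vec_join 0 v)"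
  and blkO_mult_vec: "blkO M *v u = vec_inr (M *v vec_join u 0)"
  by (simp_all add: vec_eq_iff blkX_def blkS_def blkO_def vec_inl_def vec_inr_def vec_join_def
      matrix_vector_mult_def sum_UNIV_Plus)

lemma spec_norm_le_compression:
  assumes "\<And>u. norm (A *v u) \<le> norm (M *v f u)" and "\<And>u. norm (f u) = norm u"
  shows "spec_norm A \<le> spec_norm M"
proof (rule spec_norm_le)
  fix u
  show "norm (A *v u) \<le> spec_norm M * norm u"
    using assms spec_norm_apply_le[of M "f u"] by (metis order_trans)
qed

lemma spec_norm_blkX_le: "spec_norm (blkX M) \<le> spec_norm M"
  by (rule spec_norm_le_compression[where f = "\<lambda>u. vec_join u 0"])
    (simp_all add: blkX_mult_vec norm_vec_inl_le)

lemma spec_norm_blkS_le: "spec_norm (blkS M) \<le> spec_norm M"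
  by (rule spec_norm_le_compression[where f = "\<lambda>v. vec_join 0 v"])
    (simp_all add: blkS_mult_vec norm_vec_inr_le)

lemma spec_norm_blkO_le: "spec_norm (blkO M) \<le> spec_norm M"
  by (rule spec_norm_le_compression[where f = "\<lambda>u. vec_join u 0"])
    (simp_all add: blkO_mult_vec norm_vec_inr_le)

lemma blkX_add: "blkX (A + B) = blkX A + blkX B"
  and blkS_add: "blkS (A + B) = blkS A + blkS B"
  and blkO_add: "blkO (A + B) = blkO A + blkO B"
  by (simp_all add: blkX_def blkS_def blkO_def vec_eq_iff)

lemma transpose_skewW: "transpose (skewW V) = - skewW V"
  by (simp add: vec_eq_iff transpose_def skewW_def split: sum.splits)

lemma skewW_mult_vec:
  "skewW V *v x = vec_join (- (transpose V *v vec_inr x)) (V *v vec_inl x)"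
  by (simp add: vec_eq_iff skewW_def vec_inl_def vec_inr_def vec_join_def matrix_vector_mult_def
      transpose_def sum_UNIV_Plus sum_negf split: sum.split)

lemma spec_norm_skewW_le: "spec_norm (skewW V) \<le> spec_norm V"
proof (rule spec_norm_le)
  fix x
  have "norm (skewW V *v x) ^ 2 = norm (transpose V *v vec_inr x) ^ 2 + norm (V *v vec_inl x) ^ 2"
    using norm_vec_split[of "skewW V *v x"] by (simp add: skewW_mult_vec del: transpose_matrix_vector)
  also have "\<dots> \<le> (spec_norm V * norm (vec_inr x)) ^ 2 + (spec_norm V * norm (vec_inl x)) ^ 2"
    using spec_norm_apply_le[of "transpose V" "vec_inr x"] spec_norm_apply_le[of V "vec_inl x"]
    by (intro add_mono power_mono) (simp_all add: spec_norm_transpose del: transpose_matrix_vector)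
  also have "\<dots> = (spec_norm V * norm x) ^ 2"
    by (simp add: norm_vec_split[of x] algebra_simps)
  finally show "norm (skewW V *v x) \<le> spec_norm V * norm x"
    by (rule power2_le_imp_le) (simp add: spec_norm_nonneg)
qed

lemma blkX_commutator_skewW:
  assumes "transpose Z = Z"
  shows "blkX (Z ** skewW V - skewW V ** Z) = transpose (blkO Z) ** V + transpose V ** blkO Z"
  using symmetric_entry[OF assms]
  by (simp add: vec_eq_iff blkX_def blkO_def skewW_def matrix_matrix_mult_def transpose_def sum_UNIV_Plus
      sum_negf[symmetric] sum_subtractf[symmetric] sum.distrib[symmetric] algebra_simps)

lemma blkS_commutator_skewW:
  assumes "transpose Z = Z"
  shows "blkS (Z ** skewW V - skewW V ** Z) = - (blkO Z ** transpose V) - V ** transpose (blkO Z)"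
  using symmetric_entry[OF assms]
  by (simp add: vec_eq_iff blkS_def blkO_def skewW_def matrix_matrix_mult_def transpose_def sum_UNIV_Plus
      sum_negf[symmetric] sum_subtractf[symmetric] sum.distrib[symmetric] algebra_simps)

lemma blkO_commutator_skewW: "blkO (Z ** skewW V - skewW V ** Z) = blkS Z ** V - V ** blkX Z"
  by (simp add: vec_eq_iff blkS_def blkX_def blkO_def skewW_def matrix_matrix_mult_def transpose_def
      sum_UNIV_Plus sum_negf[symmetric] sum_subtractf[symmetric] sum.distrib[symmetric] algebra_simps)

section \<open>Extreme eigenvalues of symmetric matrices\<close>

lemma nonneg_quadratic_imp_linear_coeff_eq_0:
  fixes b c :: real
  assumes "\<And>t. 0 \<le> 2 * t * c + t^2 * b"
  shows "c = 0"
proof (rule ccontr)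
  assume c: "c \<noteq> 0"
  show False
  proof (cases "b \<le> 0")
    case True
    have "0 \<le> 2 * (-c) * c + (-c)^2 * b" by (rule assms)
    moreover have "(-c)^2 * b \<le> 0" using True by (simp add: mult_nonneg_nonpos)
    moreover have "2 * (-c) * c < 0" using c by (simp add: power2_eq_square[symmetric])
    ultimately show False by linarith
  next
    case False
    have "0 \<le> 2 * (-c/b) * c + (-c/b)^2 * b" by (rule assms)
    also have "\<dots> = - (c^2 / b)" using False by (simp add: power2_eq_square field_simps)
    moreover have "c^2 / b > 0" using False c by simp
    ultimately show False by linarith
  qed
qed

text \<open>Let \<open>v\<close> minimise the Rayleigh quotient on the unit sphere, with value \<open>m\<close>. The form
  \<open>g x = x \<bullet> A x - m \<parallel>x\<parallel>\<^sup>2\<close> is nonnegative and vanishes at \<open>v\<close>; along \<open>v + t u\<close> with the residual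
  \<open>u = A v - m v\<close> it equals \<open>2 t \<parallel>u\<parallel>\<^sup>2 + t\<^sup>2 g u\<close>, which forces \<open>u = 0\<close>.\<close>
lemma symmetric_rayleigh_min_eigenvector:
  fixes A :: "real^'n::finite^'n"
  assumes sym: "transpose A = A"
  shows "\<exists>m v. v \<noteq> 0 \<and> A *v v = m *\<^sub>R v \<and> (\<forall>x. m * inner x x \<le> inner x (A *v x))"
proof -
  define f where "f x = inner x (A *v x)" for x :: "real^'n"
  have "continuous_on (sphere 0 1) f"
    unfolding f_def by (intro continuous_intros)
  moreover have "axis undefined 1 \<in> sphere (0::real^'n) 1" by simp
  ultimately obtain v where v: "v \<in> sphere 0 1" and vmin: "\<And>y. y \<in> sphere 0 1 \<Longrightarrow> f v \<le> f y"
    using continuous_attains_inf[OF compact_sphere] by blast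
  define m where "m = f v"
  have quad: "m * inner x x \<le> inner x (A *v x)" for x
  proof (cases "x = 0")
    case False
    then have "m \<le> f (x /\<^sub>R norm x)" unfolding m_def by (intro vmin) simp
    also have "f (x /\<^sub>R norm x) = inner x (A *v x) / (norm x)^2"
      by (simp add: f_def matrix_vector_mult_scaleR power2_eq_square divide_inverse)
    finally show ?thesis
      using False by (simp add: pos_le_divide_eq power2_norm_eq_inner)
  qed simp
  define g where "g x = inner x (A *v x) - m * inner x x" for x
  define u where "u = A *v v - m *\<^sub>R v"
  have "g (v + t *\<^sub>R u) = 2 * t * inner u u + t^2 * g u" for t
  proof -
    have gv: "g v = 0" using v by (simp add: g_def m_def f_def dot_square_norm)
    have "g (v + t *\<^sub>R u) = g v + 2 * t * (inner u (A *v v) - m * inner u v) + t^2 * g u"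
      by (simp add: g_def symmetric_inner_swap[OF sym, of v u] inner_commute[of v u]
          power2_eq_square algebra_simps)
    also have "inner u (A *v v) - m * inner u v = inner u u" by (simp add: u_def inner_diff_right)
    finally show ?thesis using gv by simp
  qed
  moreover have "0 \<le> g x" for x using quad[of x] by (simp add: g_def)
  ultimately have "inner u u = 0"
    by (intro nonneg_quadratic_imp_linear_coeff_eq_0[of "inner u u" "g u"]) metis
  then have "A *v v = m *\<^sub>R v" by (simp add: u_def)
  moreover have "v \<noteq> 0" using v by auto
  ultimately show ?thesis using quad by blast
qed

lemma eigvals_finite:
  assumes sym: "transpose A = (A::real^'n::finite^'n)"
  shows "finite (eigvals A)"
proof (rule ccontr)
  assume "infinite (eigvals A)"
  then obtain T where T: "finite T" "card T = CARD('n) + 1" "T \<subseteq> eigvals A"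
    using infinite_arbitrarily_large by blast
  define ev where "ev \<mu> = (SOME v. v \<noteq> 0 \<and> A *v v = \<mu> *\<^sub>R v)" for \<mu>
  have ev: "ev \<mu> \<noteq> 0" "A *v ev \<mu> = \<mu> *\<^sub>R ev \<mu>" if "\<mu> \<in> T" for \<mu>
    using someI_ex[of "\<lambda>v. v \<noteq> 0 \<and> A *v v = \<mu> *\<^sub>R v"] that T(3)
    by (auto simp: ev_def eigvals_def)
  have orth: "inner (ev \<mu>) (ev \<nu>) = 0" if "\<mu> \<in> T" "\<nu> \<in> T" "\<mu> \<noteq> \<nu>" for \<mu> \<nu>
  proof -
    have "\<nu> * inner (ev \<mu>) (ev \<nu>) = \<mu> * inner (ev \<mu>) (ev \<nu>)"
      using symmetric_inner_swap[OF sym, of "ev \<mu>" "ev \<nu>"] ev that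
      by (simp add: inner_commute)
    then show ?thesis using that by simp
  qed
  have inj: "inj_on ev T"
  proof (rule inj_onI, rule ccontr)
    fix \<mu> \<nu> assume "\<mu> \<in> T" "\<nu> \<in> T" "ev \<mu> = ev \<nu>" "\<mu> \<noteq> \<nu>"
    then show False using orth[of \<mu> \<nu>] ev(1)[of \<mu>] by simp
  qed
  have "pairwise orthogonal (ev ` T)"
    using orth unfolding pairwise_def orthogonal_def by blast
  moreover have "0 \<notin> ev ` T" using ev by auto
  ultimately have "independent (ev ` T)" by (rule pairwise_orthogonal_independent)
  then have "card (ev ` T) \<le> CARD('n)"
    using independent_bound by fastforce
  with T(2) card_image[OF inj] show False by simp
qed

lemma lam_min_symmetric:
  assumes sym: "transpose A = (A::real^'n::finite^'n)"
  shows "lam_min A \<in> eigvals A" and "lam_min A * inner x x \<le> inner x (A *v x)"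
proof -
  obtain m v where mv: "v \<noteq> 0" "A *v v = m *\<^sub>R v" and q: "\<And>x. m * inner x x \<le> inner x (A *v x)"
    using symmetric_rayleigh_min_eigenvector[OF sym] by blast
  have mem: "m \<in> eigvals A" using mv by (auto simp: eigvals_def)
  have least: "m \<le> \<mu>" if \<mu>: "\<mu> \<in> eigvals A" for \<mu>
  proof -
    obtain u where u: "u \<noteq> 0" "A *v u = \<mu> *\<^sub>R u" using \<mu> unfolding eigvals_def by blast
    then have "m * inner u u \<le> \<mu> * inner u u" using q[of u] by simp
    moreover have "0 < inner u u" using u(1) by simp
    ultimately show ?thesis by (simp add: mult_le_cancel_right_pos)
  qed
  have "lam_min A = m" unfolding lam_min_def
    by (rule Min_eqI[OF eigvals_finite[OF sym]]) (use least mem in auto)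
  then show "lam_min A \<in> eigvals A" "lam_min A * inner x x \<le> inner x (A *v x)"
    using mem q by auto
qed

lemma eigvals_uminus: "eigvals (- A) = uminus ` eigvals (A::real^'n^'n)"
proof -
  have iff: "\<mu> \<in> eigvals (- A) \<longleftrightarrow> - \<mu> \<in> eigvals A" for \<mu>
  proof -
    have "- (A *v v) = \<mu> *\<^sub>R v \<longleftrightarrow> A *v v = (- \<mu>) *\<^sub>R v" for v
      by (metis minus_minus scaleR_minus_left)
    then show ?thesis unfolding eigvals_def uminus_mult_vec by simp
  qed
  show ?thesis
  proof (intro set_eqI iffI)
    fix \<mu> assume "\<mu> \<in> eigvals (- A)"
    then show "\<mu> \<in> uminus ` eigvals A" using iff[of \<mu>] by (intro rev_image_eqI[of "- \<mu>"]) simp_all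
  next
    fix \<mu> assume "\<mu> \<in> uminus ` eigvals A"
    then obtain \<nu> where "\<nu> \<in> eigvals A" "\<mu> = - \<nu>" by blast
    then show "\<mu> \<in> eigvals (- A)" using iff[of \<mu>] by simp
  qed
qed

lemma lam_max_eq_minus_lam_min:
  assumes sym: "transpose A = (A::real^'n::finite^'n)"
  shows "lam_max A = - lam_min (- A)"
proof -
  have sym': "transpose (- A) = - A"
    using sym by (simp add: transpose_uminus)
  have "eigvals A = uminus ` eigvals (- A)"
    using eigvals_uminus[of "- A"] by simp
  moreover have "eigvals (- A) \<noteq> {}"
    using lam_min_symmetric(1)[OF sym'] by blast
  ultimately show ?thesis
    unfolding lam_max_def lam_min_def using minus_Min_eq_Max[OF eigvals_finite[OF sym']] by simp
qed

lemma pos_def_lam_min_pos: "pos_def A \<Longrightarrow> 0 < lam_min A"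
proof -
  assume pd: "pos_def A"
  then have sym: "transpose A = A" by (simp add: pos_def_def)
  obtain u where "u \<noteq> 0" "A *v u = lam_min A *\<^sub>R u"
    using lam_min_symmetric(1)[OF sym] by (auto simp: eigvals_def)
  moreover from this(1) pd have "0 < inner u (A *v u)" by (simp add: pos_def_def)
  ultimately have "0 < lam_min A * inner u u" by simp
  moreover have "0 < inner u u" using \<open>u \<noteq> 0\<close> by simp
  ultimately show ?thesis by (simp add: zero_less_mult_iff)
qed

lemma neg_def_iff_pos_def_uminus: "neg_def A \<longleftrightarrow> pos_def (- A)"
  by (simp add: neg_def_def pos_def_def transpose_uminus uminus_mult_vec)

lemma neg_def_lam_max_neg: "neg_def A \<Longrightarrow> lam_max A < 0"
proof -
  assume nd: "neg_def A"
  then have "lam_max A = - lam_min (- A)"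
    by (intro lam_max_eq_minus_lam_min) (simp add: neg_def_def)
  with nd show ?thesis
    using pos_def_lam_min_pos by (simp add: neg_def_iff_pos_def_uminus)
qed

section \<open>The Sylvester equation\<close>

lemma rayleigh_bound_mult_right:
  assumes "transpose X = X" and "\<And>x. c * inner x x \<le> inner x (X *v x)"
  shows "c * inner W W \<le> inner (W::real^'r^'s) (W ** X)"
proof -
  have row: "(W ** X) $ b = X *v (W $ b)" for b
    using assms(1) by (simp add: vec_eq_iff matrix_matrix_mult_def matrix_vector_mult_def
        transpose_def mult.commute)
  have "c * inner W W = (\<Sum>b\<in>UNIV. c * inner (W $ b) (W $ b))"
    by (simp only: inner_vec_def[of W W] sum_distrib_left)
  also have "\<dots> \<le> (\<Sum>b\<in>UNIV. inner (W $ b) ((W ** X) $ b))"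
    unfolding row by (intro sum_mono assms(2))
  also have "\<dots> = inner W (W ** X)"
    by (simp only: inner_vec_def[of W])
  finally show ?thesis .
qed

lemma rayleigh_bound_mult_left:
  assumes "transpose T = T" and "\<And>x. c * inner x x \<le> inner x (T *v x)"
  shows "c * inner W W \<le> inner (W::real^'r^'s) (T ** W)"
proof -
  have "c * inner (transpose W) (transpose W) \<le> inner (transpose W) (transpose W ** T)"
    by (rule rayleigh_bound_mult_right[OF assms])
  moreover have "transpose W ** T = transpose (T ** W)"
    using assms(1) by (simp add: matrix_transpose_mul)
  ultimately show ?thesis by (simp add: inner_transpose)
qed

definition sylvester :: "real^'r^'r \<Rightarrow> real^'s^'s \<Rightarrow> real^'r^'s \<Rightarrow> real^'r^'s" where
  "sylvester X T W = W ** X + T ** W"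

lemma linear_sylvester: "linear (sylvester X T)"
  by (rule linearI)
    (simp_all add: sylvester_def matrix_add_ldistrib matrix_add_rdistrib scalar_matrix_assoc[symmetric]
      matrix_scalar_ac scaleR_add_right)

lemma sylvester_coercive:
  assumes "transpose X = (X::real^'r::finite^'r)" and "transpose T = (T::real^'s::finite^'s)"
  shows "(lam_min X + lam_min T) * inner W W \<le> inner W (sylvester X T W)"
  using rayleigh_bound_mult_right[OF assms(1) lam_min_symmetric(2)[OF assms(1)], of W]
    rayleigh_bound_mult_left[OF assms(2) lam_min_symmetric(2)[OF assms(2)], of W]
  by (simp add: sylvester_def inner_add_right distrib_right)

lemma norm_le_sylvester:
  assumes "transpose X = (X::real^'r::finite^'r)" and "transpose T = (T::real^'s::finite^'s)"
    and "0 < lam_min X + lam_min T"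
  shows "(lam_min X + lam_min T) * norm W \<le> norm (sylvester X T W)"
proof (cases "W = 0")
  case False
  have "(lam_min X + lam_min T) * norm W * norm W \<le> inner W (sylvester X T W)"
    using sylvester_coercive[OF assms(1,2), of W] by (simp add: dot_square_norm power2_eq_square mult.assoc)
  also have "\<dots> \<le> norm (sylvester X T W) * norm W"
    using norm_cauchy_schwarz[of W "sylvester X T W"] by (simp add: mult.commute)
  finally show ?thesis using False by simp
qed simp

lemma sylvester_ex1:
  assumes "transpose X = (X::real^'r::finite^'r)" and "transpose T = (T::real^'s::finite^'s)"
    and "0 < lam_min X + lam_min T"
  shows "\<exists>!W. sylvester X T W = B"
proof -
  have "inj (sylvester X T)"
    unfolding linear_injective_0[OF linear_sylvester]
  proof (intro allI impI)
    fix W assume "sylvester X T W = 0"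
    then show "W = 0"
      using norm_le_sylvester[OF assms, of W] assms(3) by (simp add: mult_le_0_iff)
  qed
  moreover have "surj (sylvester X T)"
    using calculation by (intro linear_injective_imp_surjective linear_sylvester) simp_all
  ultimately show ?thesis by (metis bij_betw_def bij_iff)
qed

lemma sylv_sol_iff: "sylv_sol Z W \<longleftrightarrow> sylvester (blkX Z) (- blkS Z) W = blkO Z"
  by (simp add: sylv_sol_def sylvester_def)

lemma block_spectral_gap:
  assumes "pos_def (blkX Z)" and "neg_def (blkS Z)"
  shows "lam_min (blkX Z) + lam_min (- blkS Z) = lam_min (blkX Z) - lam_max (blkS Z)"
    and "0 < lam_min (blkX Z) - lam_max (blkS Z)"
proof -
  show "lam_min (blkX Z) + lam_min (- blkS Z) = lam_min (blkX Z) - lam_max (blkS Z)"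
    using assms(2) by (simp add: lam_max_eq_minus_lam_min neg_def_def)
  show "0 < lam_min (blkX Z) - lam_max (blkS Z)"
    using pos_def_lam_min_pos[OF assms(1)] neg_def_lam_max_neg[OF assms(2)] by simp
qed

lemma sylv_sol_ex1:
  assumes "pos_def (blkX Z)" and "neg_def (blkS Z)"
  shows "\<exists>!W. sylv_sol Z W"
  unfolding sylv_sol_iff
  using assms block_spectral_gap[OF assms]
  by (intro sylvester_ex1) (auto simp: pos_def_def neg_def_def transpose_uminus)

lemma spec_norm_sylv_sol_le:
  fixes Z :: "real^('r::finite+'s::finite)^('r+'s)"
  assumes "pos_def (blkX Z)" and "neg_def (blkS Z)" and "sylv_sol Z W"
  shows "spec_norm W \<le> eta_of Z * spec_norm (blkO Z)"
proof -
  define g where "g = lam_min (blkX Z) - lam_max (blkS Z)"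
  have g: "0 < g" using block_spectral_gap(2)[OF assms(1,2)] by (simp add: g_def)
  have "g * norm W \<le> norm (blkO Z)"
    using norm_le_sylvester[of "blkX Z" "- blkS Z" W] assms block_spectral_gap[OF assms(1,2)]
    by (simp add: g_def sylv_sol_iff pos_def_def neg_def_def transpose_uminus)
  then have "g * spec_norm W \<le> sqrt (real (min CARD('r) CARD('s))) * spec_norm (blkO Z)"
    using spec_norm_le_norm[of W] norm_le_sqrt_card_spec_norm[of "blkO Z"] g
    by (meson mult_left_mono less_imp_le order_trans)
  then show ?thesis
    using g by (simp add: eta_of_def g_def field_simps)
qed

section \<open>The exponential remainder\<close>

lemma exp_sub_one_sub_eq_suminf:
  fixes x :: "'a::{real_normed_algebra_1,banach}"
  shows "exp x - 1 - x = (\<Sum>n. x ^ (n + 2) /\<^sub>R fact (n + 2))"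
proof -
  have "exp x = (\<Sum>n. x ^ (n + 2) /\<^sub>R fact (n + 2)) + (\<Sum>i<2. x ^ i /\<^sub>R fact i)"
    unfolding exp_def by (rule suminf_split_initial_segment[OF summable_exp_generic])
  then show ?thesis by (simp add: numeral_2_eq_2)
qed

lemma summable_exp_tail:
  fixes x :: "'a::{real_normed_algebra_1,banach}"
  shows "summable (\<lambda>n. x ^ (n + 2) /\<^sub>R fact (n + 2))"
  using summable_ignore_initial_segment[OF summable_exp_generic[of x], of 2] by simp

lemma norm_exp_sub_one_sub_le:
  fixes x :: "'a::{real_normed_algebra_1,banach}"
  shows "norm (exp x - 1 - x) \<le> exp (norm x) - 1 - norm x"
proof -
  have s: "summable (\<lambda>n. norm (x ^ (n + 2) /\<^sub>R fact (n + 2)))"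
    using summable_ignore_initial_segment[OF summable_norm_exp[of x], of 2] by simp
  have "norm (exp x - 1 - x) \<le> (\<Sum>n. norm (x ^ (n + 2) /\<^sub>R fact (n + 2)))"
    unfolding exp_sub_one_sub_eq_suminf by (rule summable_norm[OF s])
  also have "\<dots> \<le> (\<Sum>n. norm x ^ (n + 2) /\<^sub>R fact (n + 2))"
  proof (intro suminf_le s summable_exp_tail)
    show "norm (x ^ k /\<^sub>R fact k) \<le> norm x ^ k /\<^sub>R fact k" for k
      by (simp add: divide_right_mono norm_power_ineq)
  qed
  also have "\<dots> = exp (norm x) - 1 - norm x"
    by (rule exp_sub_one_sub_eq_suminf[symmetric])
  finally show ?thesis .
qed

lemma exp_sub_one_sub_le_scaled:
  fixes y c :: real
  assumes "0 \<le> y" "y \<le> c"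
  shows "exp y - 1 - y \<le> (y / c)^2 * (exp c - 1 - c)"
proof (cases "c = 0")
  case False
  then have c: "c > 0" using assms by simp
  have "y ^ (n + 2) \<le> (y / c)^2 * c ^ (n + 2)" for n
  proof -
    have "y ^ n \<le> c ^ n" using assms by (simp add: power_mono)
    then show ?thesis
      using c assms by (simp add: power_add power2_eq_square field_simps mult_left_mono)
  qed
  then have "(\<Sum>n. y ^ (n + 2) /\<^sub>R fact (n + 2)) \<le> (\<Sum>n. (y / c)^2 * (c ^ (n + 2) /\<^sub>R fact (n + 2)))"
    by (intro suminf_le summable_exp_tail summable_mult) (simp add: divide_right_mono)
  also have "\<dots> = (y / c)^2 * (\<Sum>n. c ^ (n + 2) /\<^sub>R fact (n + 2))"
    by (rule suminf_mult[OF summable_exp_tail])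
  finally show ?thesis by (simp add: exp_sub_one_sub_eq_suminf)
qed (use assms in simp)

lemma exp_three_halves_le: "exp (3/2::real) \<le> 79/16"
proof -
  have "exp (3/2::real) ^ 2 = exp 1 ^ 3"
    by (simp flip: exp_of_nat_mult exp_add add: power2_eq_square)
  also have "\<dots> \<le> (272/100) ^ 3" using e_less_272 by (intro power_mono) auto
  also have "\<dots> \<le> (79/16)^2" by (simp add: power2_eq_square power3_eq_cube)
  finally show ?thesis by (rule power2_le_imp_le) simp
qed

lemma exp_double_sub_one_sub_le:
  fixes t :: real
  assumes "0 \<le> t" "t \<le> 3/4"
  shows "exp (2 * t) - 1 - 2 * t \<le> 13/3 * t^2"
proof -
  have "exp (2 * t) - 1 - 2 * t \<le> (2 * t / (3/2))^2 * (exp (3/2) - 1 - 3/2)"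
    using assms by (intro exp_sub_one_sub_le_scaled) auto
  also have "\<dots> \<le> (2 * t / (3/2))^2 * (79/16 - 1 - 3/2)"
    using exp_three_halves_le by (intro mult_left_mono) auto
  also have "\<dots> = 13/3 * t^2" by (simp add: power2_eq_square)
  finally show ?thesis .
qed

text \<open>The bounds for the three terms of the splitting below add up to exactly
  \<open>exp (2 \<parallel>w\<parallel>) - 1 - 2 \<parallel>w\<parallel>\<close>.\<close>
lemma norm_exp_conj_sub_commutator_le:
  fixes w z :: "'a::{real_normed_algebra_1,banach}"
  shows "norm (exp (-w) * z * exp w - z - (z * w - w * z))
    \<le> norm z * (exp (2 * norm w) - 1 - 2 * norm w)"
proof -
  define E where "E = exp w - 1 - w"
  define F where "F = exp (-w) - 1 + w"
  define \<epsilon> where "\<epsilon> = exp (norm w) - 1 - norm w"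
  have E: "norm E \<le> \<epsilon>" unfolding E_def \<epsilon>_def by (rule norm_exp_sub_one_sub_le)
  have F: "norm F \<le> \<epsilon>" unfolding F_def \<epsilon>_def using norm_exp_sub_one_sub_le[of "-w"] by simp
  have "0 \<le> \<epsilon>" using order_trans[OF norm_ge_zero E] .
  have G: "norm (exp (-w) - 1) \<le> norm w + \<epsilon>"
    using F norm_triangle_ineq4[of "exp (-w) - 1 + w" w] by (simp add: F_def)
  have "exp (-w) * z * exp w - z - (z * w - w * z) = exp (-w) * z * E + (exp (-w) - 1) * z * w + F * z"
    by (simp add: E_def F_def algebra_simps)
  also have "norm \<dots> \<le> exp (norm w) * norm z * \<epsilon> + (norm w + \<epsilon>) * norm z * norm w + \<epsilon> * norm z"
  proof (intro norm_triangle_le add_mono)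
    show "norm (exp (-w) * z * E) \<le> exp (norm w) * norm z * \<epsilon>"
      using norm_exp[of "-w"] E
      by (auto intro!: order_trans[OF norm_mult_ineq] mult_mono)
    show "norm ((exp (-w) - 1) * z * w) \<le> (norm w + \<epsilon>) * norm z * norm w"
      using G \<open>0 \<le> \<epsilon>\<close> by (auto intro!: order_trans[OF norm_mult_ineq] mult_mono)
    show "norm (F * z) \<le> \<epsilon> * norm z"
      using F \<open>0 \<le> \<epsilon>\<close> by (auto intro!: order_trans[OF norm_mult_ineq] mult_mono)
  qed
  also have "\<dots> = norm z * (exp (2 * norm w) - 1 - 2 * norm w)"
    by (simp add: \<epsilon>_def algebra_simps mult_exp_exp flip: mult_2)
  finally show ?thesis .
qed

section \<open>The matrix exponential\<close>

text \<open>\<open>real^'n^'n\<close> carries the Frobenius norm; the copy \<open>sqmat\<close> carries the operator norm,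
  which makes it a Banach algebra with \<open>\<parallel>1\<parallel> = 1\<close>, so the library's \<open>exp\<close> and its estimates apply.\<close>
typedef ('n::finite) sqmat = "UNIV :: (real^'n^'n) set"
  morphisms mat_of sqmat_of by simp

setup_lifting type_definition_sqmat

instantiation sqmat :: (finite) real_normed_vector
begin
lift_definition zero_sqmat :: "'a sqmat" is 0 .
lift_definition plus_sqmat :: "'a sqmat \<Rightarrow> 'a sqmat \<Rightarrow> 'a sqmat" is "(+)" .
lift_definition minus_sqmat :: "'a sqmat \<Rightarrow> 'a sqmat \<Rightarrow> 'a sqmat" is "(-)" .
lift_definition uminus_sqmat :: "'a sqmat \<Rightarrow> 'a sqmat" is uminus .
lift_definition scaleR_sqmat :: "real \<Rightarrow> 'a sqmat \<Rightarrow> 'a sqmat" is "(*\<^sub>R)" .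
lift_definition norm_sqmat :: "'a sqmat \<Rightarrow> real" is spec_norm .
definition dist_sqmat :: "'a sqmat \<Rightarrow> 'a sqmat \<Rightarrow> real" where "dist_sqmat a b = norm (a - b)"
definition sgn_sqmat :: "'a sqmat \<Rightarrow> 'a sqmat" where "sgn_sqmat x = inverse (norm x) *\<^sub>R x"
definition uniformity_sqmat :: "('a sqmat \<times> 'a sqmat) filter" where
  "uniformity_sqmat = (INF e\<in>{0 <..}. principal {(x, y). dist x y < e})"
definition open_sqmat :: "'a sqmat set \<Rightarrow> bool" where
  "open_sqmat S = (\<forall>x\<in>S. \<forall>\<^sub>F (x', y) in uniformity. x' = x \<longrightarrow> y \<in> S)"
instance
proof
  fix a b c :: "'a sqmat" and r s :: real
  show "a + b + c = a + (b + c)" by transfer (simp add: algebra_simps)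
  show "a + b = b + a" by transfer (simp add: algebra_simps)
  show "0 + a = a" by transfer simp
  show "- a + a = 0" by transfer simp
  show "a - b = a + - b" by transfer simp
  show "r *\<^sub>R (a + b) = r *\<^sub>R a + r *\<^sub>R b" by transfer (simp add: algebra_simps)
  show "(r + s) *\<^sub>R a = r *\<^sub>R a + s *\<^sub>R a" by transfer (simp add: algebra_simps)
  show "r *\<^sub>R s *\<^sub>R a = (r * s) *\<^sub>R a" by transfer simp
  show "1 *\<^sub>R a = a" by transfer simp
  show "dist a b = norm (a - b)" by (simp add: dist_sqmat_def)
  show "sgn a = inverse (norm a) *\<^sub>R a" by (simp add: sgn_sqmat_def)
  show "(uniformity :: ('a sqmat \<times> 'a sqmat) filter) = (INF e\<in>{0 <..}. principal {(x, y). dist x y < e})"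
    by (simp add: uniformity_sqmat_def)
  show "open U = (\<forall>x\<in>U. \<forall>\<^sub>F (x', y) in uniformity. x' = x \<longrightarrow> y \<in> U)" for U :: "'a sqmat set"
    by (simp add: open_sqmat_def)
  show "norm a = 0 \<longleftrightarrow> a = 0" by transfer (rule spec_norm_eq_0_iff)
  show "norm (a + b) \<le> norm a + norm b" by transfer (rule spec_norm_triangle)
  show "norm (r *\<^sub>R a) = \<bar>r\<bar> * norm a" by transfer (rule spec_norm_scaleR)
qed
end

instantiation sqmat :: (finite) real_normed_algebra_1
begin
lift_definition one_sqmat :: "'a sqmat" is "mat 1" .
lift_definition times_sqmat :: "'a sqmat \<Rightarrow> 'a sqmat \<Rightarrow> 'a sqmat" is "(**)" .
instance
proof
  fix a b c :: "'a sqmat" and r :: real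
  show "a * b * c = a * (b * c)" by transfer (simp add: matrix_mul_assoc)
  show "1 * a = a" by transfer simp
  show "a * 1 = a" by transfer simp
  show "(a + b) * c = a * c + b * c" by transfer (rule matrix_add_rdistrib)
  show "a * (b + c) = a * b + a * c" by transfer (rule matrix_add_ldistrib)
  show "(0::'a sqmat) \<noteq> 1" by transfer (auto simp: vec_eq_iff mat_def)
  show "r *\<^sub>R a * b = r *\<^sub>R (a * b)" by transfer (simp add: scalar_matrix_assoc)
  show "a * r *\<^sub>R b = r *\<^sub>R (a * b)" by transfer (simp add: matrix_scalar_ac scalar_matrix_assoc)
  show "norm (a * b) \<le> norm a * norm b" by transfer (rule spec_norm_mult_le)
  show "norm (1::'a sqmat) = 1" by transfer (simp add: spec_norm_def onorm_id)
qed
end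

lemma mat_of_sqmat_of [simp]: "mat_of (sqmat_of A) = A"
  by (simp add: sqmat_of_inverse)

lemma norm_sqmat_eq: "norm a = spec_norm (mat_of a)"
  by (simp add: norm_sqmat.rep_eq)

lemma mat_of_mult: "mat_of (a * b) = mat_of a ** mat_of b"
  and mat_of_one: "mat_of 1 = mat 1"
  and mat_of_scaleR: "mat_of (r *\<^sub>R a) = r *\<^sub>R mat_of a"
  and mat_of_add: "mat_of (a + b) = mat_of a + mat_of b"
  and mat_of_diff: "mat_of (a - b) = mat_of a - mat_of b"
  and mat_of_uminus: "mat_of (- a) = - mat_of a"
  by (simp_all add: times_sqmat.rep_eq one_sqmat.rep_eq scaleR_sqmat.rep_eq plus_sqmat.rep_eq
      minus_sqmat.rep_eq uminus_sqmat.rep_eq)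

lemma sqmat_of_uminus: "sqmat_of (- A) = - sqmat_of A"
  by (metis mat_of_inverse mat_of_sqmat_of mat_of_uminus)

lemma mat_of_power: "mat_of (a ^ k) = mpow (mat_of a) k"
  by (induction k) (simp_all add: mat_of_one mat_of_mult)

lemma bounded_linear_mat_of: "bounded_linear (mat_of :: 'n::finite sqmat \<Rightarrow> real^'n^'n)"
proof (rule bounded_linear_intro)
  show "norm (mat_of a) \<le> norm a * sqrt (real CARD('n))" for a :: "'n sqmat"
    using norm_le_sqrt_card_spec_norm[of "mat_of a"] by (simp add: norm_sqmat_eq mult.commute)
qed (simp_all add: mat_of_add mat_of_scaleR)

lemma bounded_linear_sqmat_of: "bounded_linear (sqmat_of :: real^'n^'n \<Rightarrow> 'n::finite sqmat)"
proof (rule bounded_linear_intro)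
  show "norm (sqmat_of A) \<le> norm A * 1" for A :: "real^'n^'n"
    using spec_norm_le_norm[of A] by (simp add: norm_sqmat_eq)
qed (metis mat_of_add mat_of_sqmat_of mat_of_inverse, metis mat_of_scaleR mat_of_sqmat_of mat_of_inverse)

instance sqmat :: (finite) banach
proof
  fix X :: "nat \<Rightarrow> 'a sqmat"
  assume "Cauchy X"
  then have "Cauchy (\<lambda>n. mat_of (X n))"
    by (rule bounded_linear.Cauchy[OF bounded_linear_mat_of])
  then obtain L where "(\<lambda>n. mat_of (X n)) \<longlonglongrightarrow> L"
    using Cauchy_convergent_iff convergent_def by blast
  then have "(\<lambda>n. sqmat_of (mat_of (X n))) \<longlonglongrightarrow> sqmat_of L"
    by (rule bounded_linear.tendsto[OF bounded_linear_sqmat_of])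
  then show "convergent X"
    by (auto simp: convergent_def mat_of_inverse)
qed

lemma mexp_eq_exp: "mexp A = mat_of (exp (sqmat_of A))"
proof -
  have "mat_of (exp (sqmat_of A)) = (\<Sum>n. mat_of (sqmat_of A ^ n /\<^sub>R fact n))"
    unfolding exp_def by (rule bounded_linear.suminf[OF bounded_linear_mat_of summable_exp_generic])
  then show ?thesis
    by (simp add: mexp_def mat_of_scaleR mat_of_power inverse_eq_divide)
qed

lemma mpow_commute: "A ** mpow A k = mpow A k ** A"
  by (induction k) (simp_all, metis matrix_mul_assoc)

lemma transpose_mpow: "transpose (mpow A k) = mpow (transpose A) k"
  by (induction k) (simp_all add: matrix_transpose_mul mpow_commute)

lemma bounded_linear_transpose: "bounded_linear (transpose :: real^'n::finite^'m::finite \<Rightarrow> real^'m^'n)"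
  unfolding linear_conv_bounded_linear[symmetric]
  by (rule linearI) (simp_all add: transpose_def vec_eq_iff)

lemma summable_mexp: "summable (\<lambda>k. (1 / fact k) *\<^sub>R mpow (A::real^'n::finite^'n) k)"
  using bounded_linear.summable[OF bounded_linear_mat_of summable_exp_generic[of "sqmat_of A"]]
  by (simp add: mat_of_scaleR mat_of_power inverse_eq_divide)

lemma transpose_mexp: "transpose (mexp A) = mexp (transpose (A::real^'n::finite^'n))"
  unfolding mexp_def
  by (simp add: bounded_linear.suminf[OF bounded_linear_transpose summable_mexp] transpose_scalar
      transpose_mpow)

lemma mexp_uminus_mult: "mexp (- W) ** mexp (W::real^'n::finite^'n) = mat 1"
  using exp_minus_inverse[of "- sqmat_of W"]
  by (simp add: mexp_eq_exp sqmat_of_uminus mat_of_one flip: mat_of_mult)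

lemma orthogonal_matrix_mexp:
  assumes "transpose W = - (W::real^'n::finite^'n)"
  shows "orthogonal_matrix (mexp W)"
  using mexp_uminus_mult[of W] assms by (simp add: orthogonal_matrix transpose_mexp)

lemma spec_norm_mexp_conj_remainder_le:
  "spec_norm (mexp (- W) ** Z ** mexp W - Z - (Z ** W - W ** (Z::real^'n::finite^'n)))
    \<le> spec_norm Z * (exp (2 * spec_norm W) - 1 - 2 * spec_norm W)"
proof -
  define w z where "w = sqmat_of W" and "z = sqmat_of Z"
  have "mexp (- W) ** Z ** mexp W - Z - (Z ** W - W ** Z)
      = mat_of (exp (- w) * z * exp w - z - (z * w - w * z))"
    by (simp add: w_def z_def mexp_eq_exp sqmat_of_uminus mat_of_mult mat_of_diff)
  then show ?thesis
    using norm_exp_conj_sub_commutator_le[of w z] by (simp add: norm_sqmat_eq w_def z_def)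
qed

section \<open>One elimination step\<close>

lemma elim_step_eq:
  "elim_step Z = mexp (- skewW (THE W. sylv_sol Z W)) ** Z ** mexp (skewW (THE W. sylv_sol Z W))"
  by (simp add: elim_step_def transpose_mexp transpose_skewW)

lemma spec_norm_elim_step_le: "spec_norm (elim_step Z) \<le> spec_norm Z"
  unfolding elim_step_def Let_def
  by (intro spec_norm_orthogonal_conj_le orthogonal_matrix_mexp transpose_skewW)

lemma transpose_elim_step: "transpose Z = Z \<Longrightarrow> transpose (elim_step Z) = elim_step Z"
  by (simp add: elim_step_def Let_def matrix_transpose_mul matrix_mul_assoc)

lemma elim_iter_0 [simp]: "elim_iter Z0 0 = Z0"
  and elim_iter_Suc [simp]: "elim_iter Z0 (Suc l) = elim_step (elim_iter Z0 l)"
  by (simp_all add: elim_iter_def)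

lemma transpose_elim_iter: "transpose Z0 = Z0 \<Longrightarrow> transpose (elim_iter Z0 l) = elim_iter Z0 l"
  by (induction l) (simp_all add: transpose_elim_step)

lemma spec_norm_elim_iter_le: "spec_norm (elim_iter Z0 l) \<le> spec_norm Z0"
  by (induction l) (auto intro: order_trans[OF spec_norm_elim_step_le])

lemma spec_norm_elim_step_remainder_le:
  assumes "pos_def (blkX Z)" and "neg_def (blkS Z)"
    and "eta_of Z * spec_norm (blkO Z) \<le> 3/4"
  defines "W \<equiv> skewW (THE V. sylv_sol Z V)"
  shows "spec_norm (elim_step Z - Z - (Z ** W - W ** Z))
    \<le> 13/3 * (eta_of Z * spec_norm (blkO Z))^2 * spec_norm Z"
proof -
  have "sylv_sol Z (THE V. sylv_sol Z V)"
    using sylv_sol_ex1[OF assms(1,2)] by (rule theI')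
  then have W: "spec_norm W \<le> eta_of Z * spec_norm (blkO Z)"
    unfolding W_def by (rule order_trans[OF spec_norm_skewW_le spec_norm_sylv_sol_le[OF assms(1,2)]])
  have "spec_norm (elim_step Z - Z - (Z ** W - W ** Z))
      \<le> spec_norm Z * (exp (2 * spec_norm W) - 1 - 2 * spec_norm W)"
    unfolding elim_step_eq W_def by (rule spec_norm_mexp_conj_remainder_le)
  also have "\<dots> \<le> spec_norm Z * (13/3 * spec_norm W ^ 2)"
    using W assms(3) spec_norm_nonneg[of W]
    by (intro mult_left_mono exp_double_sub_one_sub_le spec_norm_nonneg) simp_all
  also have "\<dots> \<le> spec_norm Z * (13/3 * (eta_of Z * spec_norm (blkO Z))^2)"
    using W spec_norm_nonneg[of W]
    by (intro mult_left_mono spec_norm_nonneg power_mono) simp_all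
  finally show ?thesis by (simp add: mult_ac)
qed

lemma elim_step_blocks_le:
  assumes sym: "transpose Z = Z" and "pos_def (blkX Z)" and "neg_def (blkS Z)"
    and "eta_of Z * spec_norm (blkO Z) \<le> 3/4"
  shows "max (spec_norm (blkX (elim_step Z) - blkX Z))
           (max (spec_norm (blkS (elim_step Z) - blkS Z)) (spec_norm (blkO (elim_step Z))))
    \<le> (2 * eta_of Z + 13/3 * eta_of Z ^ 2 * spec_norm Z) * spec_norm (blkO Z) ^ 2"
proof -
  define V where "V = (THE V. sylv_sol Z V)"
  define ZO where "ZO = blkO Z"
  define R where "R = elim_step Z - Z - (Z ** skewW V - skewW V ** Z)"
  have V: "sylv_sol Z V"
    unfolding V_def using sylv_sol_ex1[OF assms(2,3)] by (rule theI')
  have R: "spec_norm R \<le> 13/3 * eta_of Z ^ 2 * spec_norm Z * spec_norm ZO ^ 2"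
    using spec_norm_elim_step_remainder_le[OF assms(2-4)]
    by (simp add: R_def V_def ZO_def power_mult_distrib mult_ac)
  have OV: "2 * (spec_norm ZO * spec_norm V) \<le> 2 * eta_of Z * spec_norm ZO ^ 2"
    using mult_left_mono[OF spec_norm_sylv_sol_le[OF assms(2,3) V] spec_norm_nonneg[of ZO]]
    by (simp add: ZO_def power2_eq_square mult_ac)
  have step: "elim_step Z = Z + (Z ** skewW V - skewW V ** Z) + R"
    by (simp add: R_def)
  have "spec_norm (blkX (elim_step Z) - blkX Z) \<le> 2 * (spec_norm ZO * spec_norm V) + spec_norm R"
  proof -
    have "blkX (elim_step Z) - blkX Z = (transpose ZO ** V + transpose V ** ZO) + blkX R"
      by (simp add: step blkX_add blkX_commutator_skewW[OF sym] ZO_def)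
    then show ?thesis
      using spec_norm_triangle[of "transpose ZO ** V + transpose V ** ZO" "blkX R"]
        spec_norm_triangle[of "transpose ZO ** V" "transpose V ** ZO"]
        spec_norm_transpose_mult_le[of ZO V] spec_norm_transpose_mult_le[of V ZO] spec_norm_blkX_le[of R]
      by (simp add: mult.commute)
  qed
  moreover have "spec_norm (blkS (elim_step Z) - blkS Z) \<le> 2 * (spec_norm ZO * spec_norm V) + spec_norm R"
  proof -
    define P where "P = ZO ** transpose V + V ** transpose ZO"
    have "blkS (elim_step Z) - blkS Z = - P + blkS R"
      by (simp add: step blkS_add blkS_commutator_skewW[OF sym] ZO_def P_def)
    moreover have "spec_norm P \<le> 2 * (spec_norm ZO * spec_norm V)"
      using spec_norm_triangle[of "ZO ** transpose V" "V ** transpose ZO"]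
        spec_norm_mult_transpose_le[of ZO V] spec_norm_mult_transpose_le[of V ZO]
      by (simp add: P_def mult.commute)
    ultimately show ?thesis
      using spec_norm_triangle[of "- P" "blkS R"] spec_norm_blkS_le[of R]
      by (simp add: spec_norm_uminus)
  qed
  moreover have "spec_norm (blkO (elim_step Z)) \<le> spec_norm R"
  proof -
    have "blkO (Z ** skewW V - skewW V ** Z) = - ZO"
      using V by (simp add: blkO_commutator_skewW sylv_sol_def ZO_def matrix_mult_uminus_left
          algebra_simps)
    then have "blkO (elim_step Z) = blkO R"
      by (simp add: step blkO_add ZO_def)
    then show ?thesis by (simp add: spec_norm_blkO_le)
  qed
  moreover have "0 \<le> spec_norm ZO * spec_norm V"
    by (simp add: spec_norm_nonneg)
  ultimately show ?thesis
    using R OV by (simp add: ZO_def algebra_simps)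
qed

lemma elim_iter_blocks_le:
  assumes "transpose Z0 = Z0"
    and "pos_def (blkX (elim_iter Z0 l))" and "neg_def (blkS (elim_iter Z0 l))"
    and "eta_of (elim_iter Z0 l) * spec_norm (blkO (elim_iter Z0 l)) \<le> 3/4"
  shows "max (spec_norm (blkX (elim_iter Z0 (Suc l)) - blkX (elim_iter Z0 l)))
           (max (spec_norm (blkS (elim_iter Z0 (Suc l)) - blkS (elim_iter Z0 l)))
                (spec_norm (blkO (elim_iter Z0 (Suc l)))))
    \<le> (2 * eta_of (elim_iter Z0 l) + 13/3 * eta_of (elim_iter Z0 l) ^ 2 * spec_norm Z0)
        * spec_norm (blkO (elim_iter Z0 l)) ^ 2"
proof -
  define Z where "Z = elim_iter Z0 l"
  have "eta_of Z ^ 2 * spec_norm Z \<le> eta_of Z ^ 2 * spec_norm Z0"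
    unfolding Z_def by (rule mult_left_mono[OF spec_norm_elim_iter_le zero_le_power2])
  then have "2 * eta_of Z + 13/3 * eta_of Z ^ 2 * spec_norm Z \<le> 2 * eta_of Z + 13/3 * eta_of Z ^ 2 * spec_norm Z0"
    by linarith
  then have "(2 * eta_of Z + 13/3 * eta_of Z ^ 2 * spec_norm Z) * spec_norm (blkO Z) ^ 2
      \<le> (2 * eta_of Z + 13/3 * eta_of Z ^ 2 * spec_norm Z0) * spec_norm (blkO Z) ^ 2"
    by (rule mult_right_mono) simp
  with elim_step_blocks_le[OF transpose_elim_iter[OF assms(1)] assms(2-4)] show ?thesis
    unfolding elim_iter_Suc Z_def by (rule order_trans)
qed

theorem lemma9:
  fixes lam :: "'r::finite + 's::finite \<Rightarrow> real"
    and H :: "real^('r+'s)^('r+'s)"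
    and l :: nat
  assumes "\<forall>a. lam (Inl a) > 0" and "\<forall>b. lam (Inr b) < 0"
    and "transpose H = H"
    and "pos_def (blkX (elim_iter (diagm lam + H) l))"
    and "neg_def (blkS (elim_iter (diagm lam + H) l))"
    and "spec_norm (blkO (elim_iter (diagm lam + H) l))
           \<le> 3 / (4 * eta_of (elim_iter (diagm lam + H) l))"
  shows "(\<exists>!W. sylv_sol (elim_iter (diagm lam + H) l) W)
    \<and> (\<forall>W. sylv_sol (elim_iter (diagm lam + H) l) W \<longrightarrow>
          spec_norm W \<le> eta_of (elim_iter (diagm lam + H) l)
                          * spec_norm (blkO (elim_iter (diagm lam + H) l)))
    \<and> max (spec_norm (blkX (elim_iter (diagm lam + H) (Suc l)) - blkX (elim_iter (diagm lam + H) l)))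
          (max (spec_norm (blkS (elim_iter (diagm lam + H) (Suc l)) - blkS (elim_iter (diagm lam + H) l)))
               (spec_norm (blkO (elim_iter (diagm lam + H) (Suc l)))))
      \<le> (4/9 * eta_of (elim_iter (diagm lam + H) l) ^ 4 * spec_norm (diagm lam + H) ^ 3
         + 4/3 * eta_of (elim_iter (diagm lam + H) l) ^ 3 * spec_norm (diagm lam + H) ^ 2
         + 13/3 * eta_of (elim_iter (diagm lam + H) l) ^ 2 * spec_norm (diagm lam + H)
         + 4 * eta_of (elim_iter (diagm lam + H) l))
        * spec_norm (blkO (elim_iter (diagm lam + H) l)) ^ 2"
proof -
  define Z where "Z = elim_iter (diagm lam + H) l"
  define N where "N = spec_norm (diagm lam + H)"
  define \<eta> where "\<eta> = eta_of Z"
  have sym: "transpose (diagm lam + H) = diagm lam + H"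
    using assms(3) by (simp add: vec_eq_iff transpose_def diagm_def)
  have \<eta>: "0 < \<eta>"
    using block_spectral_gap(2)[OF assms(4,5)] by (simp add: \<eta>_def Z_def eta_of_def)
  have small: "eta_of Z * spec_norm (blkO Z) \<le> 3/4"
    using assms(6) \<eta> by (simp add: Z_def \<eta>_def field_simps)
  have "0 \<le> 4/9 * \<eta>^4 * N^3 + 4/3 * \<eta>^3 * N^2"
    using \<eta> by (simp add: N_def spec_norm_nonneg)
  then have "2 * \<eta> + 13/3 * \<eta>^2 * N \<le> 4/9 * \<eta>^4 * N^3 + 4/3 * \<eta>^3 * N^2 + 13/3 * \<eta>^2 * N + 4 * \<eta>"
    using \<eta> by linarith
  then have "(2 * \<eta> + 13/3 * \<eta>^2 * N) * spec_norm (blkO Z)^2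
      \<le> (4/9 * \<eta>^4 * N^3 + 4/3 * \<eta>^3 * N^2 + 13/3 * \<eta>^2 * N + 4 * \<eta>) * spec_norm (blkO Z)^2"
    by (rule mult_right_mono) simp
  then show ?thesis
    using sylv_sol_ex1[OF assms(4,5)] spec_norm_sylv_sol_le[OF assms(4,5)]
      elim_iter_blocks_le[OF sym assms(4,5) small[unfolded Z_def]]
    by (simp add: Z_def N_def \<eta>_def)
qed

end
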